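(* Let $H$ and $G$ be graphs with $G\in\operatorname{obs}^\ast(H)$. Then, up to isomorphism, \[\operatorname{obs}(G)=(\operatorname{obs}(H)\setminus\{G\})\cup\operatorname{obs}^\ast(G).\]
   Context: All graphs are finite, simple and loopless. A full-homomorphism $\varphi\colon G\to H$ is a map $V(G)\to V(H)$ such that for all $x,y\in V(G)$, $xy\in E(G)$ if and only if $\varphi(x)\varphi(y)\in E(H)$. A full $H$-colouring of $G$ is a full-homomorphism $G\to H$. A minimal $H$-obstruction is a graph $G$ that admits no full $H$-colouring while every proper induced subgraph of $G$ admits one; $\operatorname{obs}(H)$ denotes the set of minimal $H$-obstructions (up to isomorphism), and $\operatorname{obs}^\ast(H)$ the set of minimal $H$-obstructions on exactly $|V(H)|+1$ vertices. *)

theory Defs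
  imports Main
begin

type_synonym 'a sgraph = "'a set \<times> ('a \<times> 'a) set"

definition verts :: "'a sgraph \<Rightarrow> 'a set" where "verts G = fst G"
definition edges :: "'a sgraph \<Rightarrow> ('a \<times> 'a) set" where "edges G = snd G"

definition is_graph :: "'a sgraph \<Rightarrow> bool" where
  "is_graph G \<longleftrightarrow> finite (verts G) \<and> edges G \<subseteq> verts G \<times> verts G
     \<and> sym (edges G) \<and> irrefl (edges G)"

definition full_hom :: "'a sgraph \<Rightarrow> 'b sgraph \<Rightarrow> ('a \<Rightarrow> 'b) \<Rightarrow> bool" where
  "full_hom G H \<phi> \<longleftrightarrow> (\<forall>x\<in>verts G. \<phi> x \<in> verts H) \<and>
     (\<forall>x\<in>verts G. \<forall>y\<in>verts G. (x, y) \<in> edges G \<longleftrightarrow> (\<phi> x, \<phi> y) \<in> edges H)"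

definition full_colourable :: "'a sgraph \<Rightarrow> 'b sgraph \<Rightarrow> bool" where
  "full_colourable G H \<longleftrightarrow> (\<exists>\<phi>. full_hom G H \<phi>)"

definition induced :: "'a sgraph \<Rightarrow> 'a set \<Rightarrow> 'a sgraph" where
  "induced G S = (S, edges G \<inter> (S \<times> S))"

definition min_obs :: "'b sgraph \<Rightarrow> 'a sgraph \<Rightarrow> bool" where
  "min_obs H G \<longleftrightarrow> is_graph G \<and> \<not> full_colourable G H \<and>
     (\<forall>S. S \<subset> verts G \<longrightarrow> full_colourable (induced G S) H)"

definition min_obs_star :: "'b sgraph \<Rightarrow> 'a sgraph \<Rightarrow> bool" where
  "min_obs_star H G \<longleftrightarrow> min_obs H G \<and> card (verts G) = card (verts H) + 1"

definition graph_iso :: "'a sgraph \<Rightarrow> 'b sgraph \<Rightarrow> bool" where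
  "graph_iso G K \<longleftrightarrow> (\<exists>f. bij_betw f (verts G) (verts K) \<and>
     (\<forall>x\<in>verts G. \<forall>y\<in>verts G. (x, y) \<in> edges G \<longleftrightarrow> (f x, f y) \<in> edges K))"

end

theory Submission
  imports Defs
begin

text \<open>Two vertices of a minimal obstruction never have the same neighbourhood (a twin could
  be coloured like its partner), and by Sumner's lemma a point-determining graph has a vertex
  whose deletion keeps it point-determining. Full homomorphisms out of point-determining graphs
  are injective, so a minimal \<open>X\<close>-obstruction has at most \<open>|V(X)| + 1\<close> vertices, and \<open>H\<close>
  embeds into \<open>G \<in> obs\<^sup>*(H)\<close> as \<open>G\<close> minus a vertex. Hence \<open>H\<close>-colourability implies
  \<open>G\<close>-colourability. A minimal \<open>G\<close>-obstruction \<open>K\<close> is then either a minimal \<open>H\<close>-obstruction, or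
  has a proper induced subgraph that maps fully, and necessarily onto, \<open>G\<close>; in the latter case
  \<open>|V(K)| > |V(G)|\<close>, which forces \<open>K \<in> obs\<^sup>*(G)\<close>. Conversely, a full homomorphism from a minimal
  \<open>H\<close>-obstruction to \<open>G\<close> is bijective, i.e. an isomorphism.\<close>

lemma verts_induced [simp]: "verts (induced A S) = S"
  by (simp add: induced_def verts_def)

lemma edges_induced [simp]: "edges (induced A S) = edges A \<inter> (S \<times> S)"
  by (simp add: induced_def edges_def)

lemma full_hom_comp:
  assumes "full_hom A B f" "full_hom B C g"
  shows "full_hom A C (g \<circ> f)"
  using assms unfolding full_hom_def by auto

lemma full_colourable_trans:
  assumes "full_colourable A B" "full_colourable B C"
  shows "full_colourable A C"
  using assms full_hom_comp unfolding full_colourable_def by blast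

lemma full_hom_into_induced:
  assumes "full_hom A B f" "f ` verts A \<subseteq> T"
  shows "full_hom A (induced B T) f"
  using assms unfolding full_hom_def by auto

lemma full_hom_from_induced:
  assumes "full_hom B (induced A S) g" "S \<subseteq> verts A"
  shows "full_hom B A g"
  using assms unfolding full_hom_def by auto

lemma full_hom_inv_into:
  assumes f: "full_hom A B f" and bij: "bij_betw f (verts A) (verts B)"
  shows "full_hom B A (inv_into (verts A) f)"
  unfolding full_hom_def
proof (intro conjI ballI)
  fix x assume "x \<in> verts B"
  then show "inv_into (verts A) f x \<in> verts A"
    using bij by (metis bij_betw_def inv_into_into)
next
  fix x y assume x: "x \<in> verts B" and y: "y \<in> verts B"
  let ?g = "inv_into (verts A) f"
  have gx: "?g x \<in> verts A" "f (?g x) = x" and gy: "?g y \<in> verts A" "f (?g y) = y"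
    using x y bij by (auto simp: bij_betw_def inv_into_into f_inv_into_f)
  show "(x, y) \<in> edges B \<longleftrightarrow> (?g x, ?g y) \<in> edges A"
    using f gx gy unfolding full_hom_def by metis
qed

lemma graph_iso_iff_bij_full_hom:
  "graph_iso K G \<longleftrightarrow> (\<exists>f. full_hom K G f \<and> bij_betw f (verts K) (verts G))"
  unfolding graph_iso_def full_hom_def bij_betw_def by blast

lemma min_obs_verts_nonempty:
  assumes "min_obs X K"
  shows "verts K \<noteq> {}"
proof
  assume "verts K = {}"
  then have "full_hom K X (\<lambda>_. undefined)" by (simp add: full_hom_def)
  with assms show False unfolding min_obs_def full_colourable_def by blast
qed

lemma min_obs_colourable_proper_subgraph:
  assumes "min_obs X K" "S \<subset> verts K"
  obtains \<phi> where "full_hom (induced K S) X \<phi>"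
  using assms unfolding min_obs_def full_colourable_def by blast

definition nbhd :: "'a sgraph \<Rightarrow> 'a \<Rightarrow> 'a set" where
  "nbhd K x = {z \<in> verts K. (x, z) \<in> edges K}"

definition point_determining :: "'a sgraph \<Rightarrow> bool" where
  "point_determining K \<longleftrightarrow> inj_on (nbhd K) (verts K)"

lemma nbhd_delete:
  assumes "y \<in> verts K" "y \<noteq> x"
  shows "nbhd (induced K (verts K - {x})) y = nbhd K y - {x}"
  using assms by (auto simp: nbhd_def)

lemma full_hom_inj_on_point_determining:
  assumes f: "full_hom A B f" and pd: "point_determining A"
  shows "inj_on f (verts A)"
proof (rule inj_onI)
  fix x y assume x: "x \<in> verts A" and y: "y \<in> verts A" and eq: "f x = f y"
  have "nbhd A x = nbhd A y"
    using f x y eq unfolding full_hom_def nbhd_def by auto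
  with pd x y show "x = y" unfolding point_determining_def by (meson inj_onD)
qed

lemma full_colourable_twin_extend:
  assumes g: "is_graph K" and x: "x \<in> verts K" and y: "y \<in> verts K" and "x \<noteq> y"
    and twins: "nbhd K x = nbhd K y"
    and col: "full_colourable (induced K (verts K - {x})) X"
  shows "full_colourable K X"
proof -
  have sy: "sym (edges K)" and ir: "irrefl (edges K)" using g by (auto simp: is_graph_def)
  obtain \<phi> where \<phi>: "full_hom (induced K (verts K - {x})) X \<phi>"
    using col unfolding full_colourable_def by blast
  have yS: "y \<in> verts K - {x}" using y \<open>x \<noteq> y\<close> by simp
  have \<phi>_verts: "\<phi> u \<in> verts X" if "u \<in> verts K - {x}" for u
    using \<phi> that by (simp add: full_hom_def)
  have \<phi>_edges: "(u, v) \<in> edges K \<longleftrightarrow> (\<phi> u, \<phi> v) \<in> edges X"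
    if "u \<in> verts K - {x}" "v \<in> verts K - {x}" for u v
    using \<phi> that by (auto simp: full_hom_def)
  have xz: "(x, z) \<in> edges K \<longleftrightarrow> (y, z) \<in> edges K" if "z \<in> verts K" for z
    using twins that unfolding nbhd_def by blast
  have zx: "(z, x) \<in> edges K \<longleftrightarrow> (z, y) \<in> edges K" if "z \<in> verts K" for z
    using xz[OF that] sy by (meson symD)
  have "full_hom K X (\<phi>(x := \<phi> y))"
    unfolding full_hom_def
  proof (intro conjI ballI)
    fix u assume "u \<in> verts K"
    then show "(\<phi>(x := \<phi> y)) u \<in> verts X" using \<phi>_verts yS by auto
  next
    fix u v assume u: "u \<in> verts K" and v: "v \<in> verts K"
    have "(y, y) \<notin> edges K" "(x, x) \<notin> edges K" using ir by (auto simp: irrefl_def)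
    then show "(u, v) \<in> edges K \<longleftrightarrow> ((\<phi>(x := \<phi> y)) u, (\<phi>(x := \<phi> y)) v) \<in> edges X"
      using u v xz[of v] zx[of u] \<phi>_edges[of u v] \<phi>_edges[OF yS, of v] \<phi>_edges[of u y]
        \<phi>_edges[OF yS yS] yS
      by (cases "u = x"; cases "v = x") auto
  qed
  then show ?thesis unfolding full_colourable_def by blast
qed

lemma min_obs_point_determining:
  assumes mo: "min_obs X K"
  shows "point_determining K"
  unfolding point_determining_def
proof (rule inj_onI, rule ccontr)
  fix x y assume x: "x \<in> verts K" and y: "y \<in> verts K"
    and twins: "nbhd K x = nbhd K y" and "x \<noteq> y"
  have g: "is_graph K" using mo by (simp add: min_obs_def)
  have "verts K - {x} \<subset> verts K" using x by blast
  then have "full_colourable (induced K (verts K - {x})) X"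
    using mo by (simp add: min_obs_def)
  then have "full_colourable K X"
    by (rule full_colourable_twin_extend[OF g x y \<open>x \<noteq> y\<close> twins])
  with mo show False by (simp add: min_obs_def)
qed

lemma twins_after_deletion:
  assumes pd: "point_determining K" and x: "x \<in> verts K"
    and not_pd: "\<not> point_determining (induced K (verts K - {x}))"
  obtains a b where "a \<in> verts K" "b \<in> verts K" "a \<noteq> x" "b \<noteq> x"
    "nbhd K a = insert x (nbhd K b)" "x \<notin> nbhd K b"
proof -
  obtain a b where a: "a \<in> verts K - {x}" and b: "b \<in> verts K - {x}" and "a \<noteq> b"
    and "nbhd (induced K (verts K - {x})) a = nbhd (induced K (verts K - {x})) b"
    using not_pd unfolding point_determining_def inj_on_def by auto
  then have eq: "nbhd K a - {x} = nbhd K b - {x}"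
    using a b by (simp add: nbhd_delete)
  have "nbhd K a \<noteq> nbhd K b"
    using pd a b \<open>a \<noteq> b\<close> unfolding point_determining_def by (meson DiffD1 inj_onD)
  then consider "x \<in> nbhd K a" "x \<notin> nbhd K b" | "x \<in> nbhd K b" "x \<notin> nbhd K a"
    using eq by blast
  then show thesis
  proof cases
    case 1
    then have "nbhd K a = insert x (nbhd K b)" using eq by blast
    with 1 a b show thesis by (intro that) auto
  next
    case 2
    then have "nbhd K b = insert x (nbhd K a)" using eq by blast
    with 2 a b show thesis by (intro that) auto
  qed
qed

lemma sumner_point_determining_deletion:
  assumes g: "is_graph K" and pd: "point_determining K" and ne: "verts K \<noteq> {}"
  shows "\<exists>v\<in>verts K. point_determining (induced K (verts K - {v}))"
proof (rule ccontr)
  assume "\<not> ?thesis"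
  then have not_pd: "\<not> point_determining (induced K (verts K - {x}))" if "x \<in> verts K" for x
    using that by blast
  have fin: "finite (verts K)" and sy: "sym (edges K)" using g by (auto simp: is_graph_def)
  have nbhd_sym: "u \<in> nbhd K w \<longleftrightarrow> w \<in> nbhd K u" if "u \<in> verts K" "w \<in> verts K" for u w
    using that sy unfolding nbhd_def by (auto dest: symD)
  have fin_nbhd: "finite (nbhd K x)" for x
    using fin by (simp add: nbhd_def)
  have "Max ((\<lambda>x. card (nbhd K x)) ` verts K) \<in> (\<lambda>x. card (nbhd K x)) ` verts K"
    using fin ne by (intro Max_in) auto
  then obtain v where v: "v \<in> verts K"
    and "card (nbhd K v) = Max ((\<lambda>x. card (nbhd K x)) ` verts K)"
    by auto
  then have v_max: "card (nbhd K x) \<le> card (nbhd K v)" if "x \<in> verts K" for x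
    using fin that by simp
  obtain a b where a: "a \<in> verts K" and b: "b \<in> verts K"
    and "a \<noteq> v" "b \<noteq> v"
    and Na: "nbhd K a = insert v (nbhd K b)" and vb: "v \<notin> nbhd K b"
    by (rule twins_after_deletion[OF pd v not_pd[OF v]])
  obtain c d where c: "c \<in> verts K" and d: "d \<in> verts K"
    and "c \<noteq> b" "d \<noteq> b"
    and Nc: "nbhd K c = insert b (nbhd K d)" and bd: "b \<notin> nbhd K d"
    by (rule twins_after_deletion[OF pd b not_pd[OF b]])
  have "a \<noteq> b" using Na vb by auto
  \<comment> \<open>The twins separated by \<open>b\<close> turn out to be \<open>c\<close> and \<open>v\<close>, so \<open>c\<close> has one more neighbour
    than the vertex \<open>v\<close> of maximum degree.\<close>
  have "c \<in> nbhd K b" using Nc nbhd_sym[OF b c] by simp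
  then have "a \<in> nbhd K c" using Na nbhd_sym[OF c a] by simp
  then have "d \<in> nbhd K a" using Nc \<open>a \<noteq> b\<close> nbhd_sym[OF a d] by simp
  then have "d = v" using Na bd nbhd_sym[OF d b] by auto
  have "b \<notin> nbhd K v" using vb nbhd_sym[OF b v] by simp
  then have "card (nbhd K c) = card (nbhd K v) + 1"
    using Nc \<open>d = v\<close> fin_nbhd by simp
  with v_max[OF c] show False by simp
qed

lemma min_obs_card_le:
  assumes mo: "min_obs X K" and finX: "finite (verts X)"
  shows "card (verts K) \<le> card (verts X) + 1"
proof -
  have g: "is_graph K" using mo by (simp add: min_obs_def)
  obtain v where v: "v \<in> verts K" and pd: "point_determining (induced K (verts K - {v}))"
    using sumner_point_determining_deletion[OF g min_obs_point_determining[OF mo]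
        min_obs_verts_nonempty[OF mo]] by blast
  have "verts K - {v} \<subset> verts K" using v by blast
  then obtain \<phi> where \<phi>: "full_hom (induced K (verts K - {v})) X \<phi>"
    by (rule min_obs_colourable_proper_subgraph[OF mo])
  have "inj_on \<phi> (verts K - {v})" "\<phi> ` (verts K - {v}) \<subseteq> verts X"
    using full_hom_inj_on_point_determining[OF \<phi> pd] \<phi> by (auto simp: full_hom_def)
  then have "card (verts K - {v}) \<le> card (verts X)"
    using finX by (rule card_inj_on_le)
  with v g show ?thesis by (simp add: is_graph_def)
qed

lemma full_hom_onto_min_obs:
  assumes f: "full_hom A G \<phi>" and mo: "min_obs H G" and nc: "\<not> full_colourable A H"
  shows "\<phi> ` verts A = verts G"
proof (rule ccontr)
  assume "\<phi> ` verts A \<noteq> verts G"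
  moreover have "\<phi> ` verts A \<subseteq> verts G" using f by (auto simp: full_hom_def)
  ultimately have "\<phi> ` verts A \<subset> verts G" by blast
  then obtain \<chi> where "full_hom (induced G (\<phi> ` verts A)) H \<chi>"
    by (rule min_obs_colourable_proper_subgraph[OF mo])
  then have "full_hom A H (\<chi> \<circ> \<phi>)"
    using full_hom_comp full_hom_into_induced[OF f] by blast
  with nc show False unfolding full_colourable_def by blast
qed

lemma full_colourable_min_obs_star:
  assumes finH: "finite (verts H)" and ms: "min_obs_star H G"
  shows "full_colourable H G"
proof -
  have mo: "min_obs H G" and card_G: "card (verts G) = card (verts H) + 1"
    using ms by (auto simp: min_obs_star_def)
  have g: "is_graph G" using mo by (simp add: min_obs_def)
  obtain v where v: "v \<in> verts G" and pd: "point_determining (induced G (verts G - {v}))"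
    using sumner_point_determining_deletion[OF g min_obs_point_determining[OF mo]
        min_obs_verts_nonempty[OF mo]] by blast
  define S where "S = verts G - {v}"
  have "S \<subset> verts G" using v by (auto simp: S_def)
  then obtain \<phi> where \<phi>: "full_hom (induced G S) H \<phi>"
    by (rule min_obs_colourable_proper_subgraph[OF mo])
  have inj: "inj_on \<phi> S"
    using full_hom_inj_on_point_determining[OF \<phi>] pd by (simp add: S_def)
  have "card S = card (verts H)"
    using card_G v g by (simp add: S_def is_graph_def)
  moreover have "\<phi> ` S \<subseteq> verts H" using \<phi> by (auto simp: full_hom_def)
  ultimately have "\<phi> ` S = verts H"
    using inj finH by (simp add: card_image card_subset_eq)
  with inj have "bij_betw \<phi> (verts (induced G S)) (verts H)" by (simp add: bij_betw_def)
  then have "full_hom H (induced G S) (inv_into S \<phi>)"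
    using full_hom_inv_into[OF \<phi>] by simp
  then have "full_hom H G (inv_into S \<phi>)"
    by (rule full_hom_from_induced) (simp add: S_def)
  then show ?thesis unfolding full_colourable_def by blast
qed

lemma min_obs_iso_of_full_hom:
  assumes mo: "min_obs H K" and moG: "min_obs H G" and f: "full_hom K G f"
  shows "graph_iso K G"
proof -
  have "f ` verts K = verts G"
    using full_hom_onto_min_obs[OF f moG] mo by (simp add: min_obs_def)
  moreover have "inj_on f (verts K)"
    using full_hom_inj_on_point_determining[OF f min_obs_point_determining[OF mo]] .
  ultimately show ?thesis
    using f unfolding graph_iso_iff_bij_full_hom bij_betw_def by blast
qed

lemma min_obs_not_iso:
  assumes "min_obs G K"
  shows "\<not> graph_iso K G"
proof
  assume "graph_iso K G"
  then have "full_colourable K G"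
    unfolding graph_iso_iff_bij_full_hom full_colourable_def by blast
  with assms show False by (simp add: min_obs_def)
qed

lemma min_obs_of_min_obs_not_iso:
  assumes mo: "min_obs H K" and moG: "min_obs H G" and HG: "full_colourable H G"
    and not_iso: "\<not> graph_iso K G"
  shows "min_obs G K"
proof -
  have "\<not> full_colourable K G"
    using min_obs_iso_of_full_hom[OF mo moG] not_iso unfolding full_colourable_def by blast
  moreover have "full_colourable (induced K S) G" if "S \<subset> verts K" for S
  proof -
    have "full_colourable (induced K S) H" using mo that by (simp add: min_obs_def)
    then show ?thesis by (rule full_colourable_trans[OF _ HG])
  qed
  ultimately show ?thesis using mo by (simp add: min_obs_def)
qed

lemma min_obs_card_gt:
  assumes mo: "min_obs G K" and moG: "min_obs H G"
    and S: "S \<subset> verts K" and nc: "\<not> full_colourable (induced K S) H"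
  shows "card (verts G) < card (verts K)"
proof -
  obtain \<phi> where \<phi>: "full_hom (induced K S) G \<phi>"
    using min_obs_colourable_proper_subgraph[OF mo S] .
  have finK: "finite (verts K)" using mo by (simp add: min_obs_def is_graph_def)
  have "verts G = \<phi> ` S"
    using full_hom_onto_min_obs[OF \<phi> moG nc] by simp
  then have "card (verts G) \<le> card S"
    using card_image_le finite_subset[OF psubset_imp_subset[OF S] finK] by simp
  also have "\<dots> < card (verts K)"
    using S finK by (rule psubset_card_mono[rotated])
  finally show ?thesis .
qed

theorem theorem3p5:
  fixes H :: "'a sgraph" and G :: "'b sgraph" and K :: "'c sgraph"
  assumes "is_graph H" and "is_graph G" and "min_obs_star H G"
  shows "min_obs G K \<longleftrightarrow> ((min_obs H K \<and> \<not> graph_iso K G) \<or> min_obs_star G K)"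
proof -
  have moHG: "min_obs H G" using assms(3) by (simp add: min_obs_star_def)
  have "finite (verts H)" using assms(1) by (simp add: is_graph_def)
  then have HG: "full_colourable H G" using assms(3) by (rule full_colourable_min_obs_star)
  have forward: "(min_obs H K \<and> \<not> graph_iso K G) \<or> min_obs_star G K" if mo: "min_obs G K"
  proof (cases "\<forall>S. S \<subset> verts K \<longrightarrow> full_colourable (induced K S) H")
    case True
    have "\<not> full_colourable K H"
    proof
      assume "full_colourable K H"
      then have "full_colourable K G" by (rule full_colourable_trans[OF _ HG])
      with mo show False by (simp add: min_obs_def)
    qed
    with True mo have "min_obs H K" by (simp add: min_obs_def)
    then show ?thesis using min_obs_not_iso[OF mo] by blast
  next
    case False
    then obtain S where "S \<subset> verts K" "\<not> full_colourable (induced K S) H" by blast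
    then have "card (verts G) < card (verts K)" by (rule min_obs_card_gt[OF mo moHG])
    moreover have "card (verts K) \<le> card (verts G) + 1"
      using min_obs_card_le[OF mo] assms(2) by (simp add: is_graph_def)
    ultimately show ?thesis using mo by (simp add: min_obs_star_def)
  qed
  have "min_obs G K" if "min_obs H K" "\<not> graph_iso K G"
    by (rule min_obs_of_min_obs_not_iso[OF that(1) moHG HG that(2)])
  then show ?thesis using forward unfolding min_obs_star_def by blast
qed

end
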